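(* For any real $R\ge 1$, there exists an $R$-competitive incremental algorithm for frequency allocation in bipartite graphs if and only if there exists an $R$-competitive F-system.
   Context: Frequency allocation: a (possibly infinite) undirected graph $G$ is given. Requests arrive one at a time, each at some vertex. An incremental algorithm must, on arrival of each request, immediately and irrevocably assign it a frequency (a positive integer). After every step, for the current loads $\ell_v$ (number of requests that have arrived at vertex $v$), letting $L_v$ be the set of frequencies assigned to requests at $v$: all $\ell_v$ requests at $v$ have distinct frequencies (so $|L_v|=\ell_v$), and $L_v\cap L_w=\emptyset$ for every edge $(v,w)$. The cost is the number of distinct frequencies used, $|\bigcup_v L_v|$. ${\textit{opt}}(G,\bar\ell)$ denotes the minimum of $|\bigcup_v L_v|$ over all assignments of sets $L_v$ of positive integers with $|L_v|=\ell_v$ and $L_v\cap L_w=\emptyset$ for every edge $(v,w)$. An incremental algorithm is $R$-competitive for bipartite graphs if there is a constant $\lambda$ such that for every bipartite graph $G$ and every request sequence, the number of frequencies used is at most $R\cdot{\textit{opt}}(G,\bar\ell)+\lambda$, where $\bar\ell$ is the load vector of the sequence. F-system: a family $\mathcal F=\{F^c_{t,k}\}$ of sets of positive integers, indexed by $c\in\{A,B\}$ and integers $0<k\le t$, such that (F1) $|F^c_{t,k}|\ge k$ for all $c,t,k$; and (F2) $F^A_{t,k}\cap F^B_{t',k'}=\emptyset$ for all $k\le t$, $k'\le t'$ with $k+k'\le\max(t,t')$. An F-system is $R$-competitive if there is a constant $\lambda$ (independent of $t$) such that for every positive integer $t$, $\left|\bigcup_{c\in\{A,B\}}\bigcup_{0<\kappa\le\tau\le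 t}F^c_{\tau,\kappa}\right|\le Rt+\lambda$. *)

theory Defs
  imports Complex_Main
begin

text \<open>An undirected graph on vertex type 'v is a symmetric edge relation. Graphs may be infinite.\<close>

definition bipartite_graph :: "('v \<Rightarrow> 'v \<Rightarrow> bool) \<Rightarrow> bool" where
  "bipartite_graph E \<longleftrightarrow>
     (\<forall>v w. E v w \<longrightarrow> E w v) \<and> (\<exists>side :: 'v \<Rightarrow> bool. \<forall>v w. E v w \<longrightarrow> side v \<noteq> side w)"

definition load :: "'v list \<Rightarrow> 'v \<Rightarrow> nat" where
  "load xs v = length (filter (\<lambda>u. u = v) xs)"

definition feasible_assignment ::
  "('v \<Rightarrow> 'v \<Rightarrow> bool) \<Rightarrow> ('v \<Rightarrow> nat) \<Rightarrow> ('v \<Rightarrow> nat set) \<Rightarrow> bool" where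
  "feasible_assignment E l L \<longleftrightarrow>
     (\<forall>v. finite (L v) \<and> card (L v) = l v \<and> 0 \<notin> L v) \<and>
     (\<forall>v w. E v w \<longrightarrow> L v \<inter> L w = {})"

definition opt :: "('v \<Rightarrow> 'v \<Rightarrow> bool) \<Rightarrow> ('v \<Rightarrow> nat) \<Rightarrow> nat" where
  "opt E l = (LEAST n. \<exists>L. feasible_assignment E l L \<and> finite (\<Union>v. L v)
                              \<and> card (\<Union>v. L v) = n)"

text \<open>An incremental algorithm knows the graph E. Given the request sequence so far
  (the last element being the newly arrived request), it returns the frequency of
  the newly arrived request. Thus request number i of a sequence xs receives
  frequency alg E (take (Suc i) xs); this encodes both that the decision is made
  on arrival (depends only on the prefix) and that it is irrevocable.\<close>

type_synonym 'v algorithm = "('v \<Rightarrow> 'v \<Rightarrow> bool) \<Rightarrow> 'v list \<Rightarrow> nat"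

definition alg_freqs :: "'v algorithm \<Rightarrow> ('v \<Rightarrow> 'v \<Rightarrow> bool) \<Rightarrow> 'v list \<Rightarrow> 'v \<Rightarrow> nat set" where
  "alg_freqs alg E xs v = {alg E (take (Suc i) xs) | i. i < length xs \<and> xs ! i = v}"

text \<open>Validity after the whole sequence xs (validity after every step follows by
  requiring this for every sequence, in particular every prefix).\<close>
definition alg_valid :: "'v algorithm \<Rightarrow> ('v \<Rightarrow> 'v \<Rightarrow> bool) \<Rightarrow> 'v list \<Rightarrow> bool" where
  "alg_valid alg E xs \<longleftrightarrow>
     (\<forall>v. card (alg_freqs alg E xs v) = load xs v \<and> 0 \<notin> alg_freqs alg E xs v) \<and>
     (\<forall>v w. E v w \<longrightarrow> alg_freqs alg E xs v \<inter> alg_freqs alg E xs w = {})"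

definition alg_cost :: "'v algorithm \<Rightarrow> ('v \<Rightarrow> 'v \<Rightarrow> bool) \<Rightarrow> 'v list \<Rightarrow> nat" where
  "alg_cost alg E xs = card (\<Union>v. alg_freqs alg E xs v)"

definition competitive_alg :: "real \<Rightarrow> 'v algorithm \<Rightarrow> bool" where
  "competitive_alg R alg \<longleftrightarrow>
     (\<exists>lam::real. \<forall>E xs. bipartite_graph E \<longrightarrow>
        alg_valid alg E xs \<and>
        real (alg_cost alg E xs) \<le> R * real (opt E (load xs)) + lam)"

text \<open>Colour c: True stands for A, False for B. F c t k is F^c_{t,k}; only indices
  0 < k \<le> t are relevant.\<close>

type_synonym fsys = "bool \<Rightarrow> nat \<Rightarrow> nat \<Rightarrow> nat set"

definition F_system :: "fsys \<Rightarrow> bool" where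
  "F_system F \<longleftrightarrow>
     (\<forall>c t k. 0 < k \<and> k \<le> t \<longrightarrow> 0 \<notin> F c t k \<and> (infinite (F c t k) \<or> k \<le> card (F c t k))) \<and>
     (\<forall>t k t' k'. 0 < k \<and> k \<le> t \<and> 0 < k' \<and> k' \<le> t' \<and> k + k' \<le> max t t'
        \<longrightarrow> F True t k \<inter> F False t' k' = {})"

definition F_union :: "fsys \<Rightarrow> nat \<Rightarrow> nat set" where
  "F_union F t = (\<Union>{F c \<tau> \<kappa> | c \<tau> \<kappa>. 0 < \<kappa> \<and> \<kappa> \<le> \<tau> \<and> \<tau> \<le> t})"

definition competitive_F_system :: "real \<Rightarrow> fsys \<Rightarrow> bool" where
  "competitive_F_system R F \<longleftrightarrow> F_system F \<and>
     (\<exists>lam::real. \<forall>t::nat. 0 < t \<longrightarrow>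
        finite (F_union F t) \<and> real (card (F_union F t)) \<le> R * real t + lam)"

end

theory Submission
  imports Defs "HOL-Library.Countable"
begin

text \<open>
  Algorithm to F-system: feed the algorithm one fixed "universal" request sequence on
  a bipartite graph whose vertices are indexed by triples (c, t, k); in phase t, for
  k = 1..t, vertex (c, t, k) receives k requests, and (A, t, k) is joined to (B, t', k')
  iff k + k' \<le> max t t'.  Reading off the frequencies at (c, t, k) after phase t gives an
  F-system, and the optimum after phase t is at most t.

  F-system to algorithm: the k-th request at a vertex v of colour c is served by a
  fresh frequency of F^c_{t,k}, where t is the largest load seen so far on v or on an
  edge at v.  Property (F2) keeps neighbours apart and t never exceeds the optimum,
  so all frequencies lie in the union of the F_{\<tau>,\<kappa>} with \<tau> \<le> opt.
\<close>

section \<open>Loads of request sequences\<close>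

lemma load_Nil [simp]: "load [] v = 0"
  by (simp add: load_def)

lemma load_Cons [simp]: "load (x # xs) v = (if x = v then 1 else 0) + load xs v"
  by (simp add: load_def)

lemma load_append [simp]: "load (xs @ ys) v = load xs v + load ys v"
  by (simp add: load_def)

lemma load_replicate [simp]: "load (replicate n a) v = (if a = v then n else 0)"
  by (simp add: load_def)

lemma load_eq_0_iff: "load xs v = 0 \<longleftrightarrow> v \<notin> set xs"
  by (auto simp add: load_def filter_empty_conv)

lemma load_card: "load xs v = card {i. i < length xs \<and> xs ! i = v}"
  by (simp add: load_def length_filter_conv_card)

lemma load_take_le: "load (take n xs) v \<le> load xs v"
  unfolding load_def by (metis append_take_drop_id filter_append length_append le_add1)

lemma load_take_mono: "m \<le> n \<Longrightarrow> load (take m xs) v \<le> load (take n xs) v"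
  by (metis load_take_le min.absorb1 take_take)

lemma load_take_Suc_nth:
  "i < length xs \<Longrightarrow> load (take (Suc i) xs) (xs ! i) = Suc (load (take i xs) (xs ! i))"
  by (simp add: take_Suc_conv_app_nth)

lemma load_distinct_sum: "v \<noteq> w \<Longrightarrow> load xs v + load xs w \<le> length xs"
  by (induction xs) auto

section \<open>The optimum of a bipartite instance\<close>

text \<open>Upper bound: if every vertex and every edge carries load at most T, a
  2-colouring lets vertices of one colour use an initial and vertices of the other
  colour a final segment of {1..T}.\<close>
lemma feasible_two_colouring:
  fixes l :: "'v \<Rightarrow> nat" and s :: "'v \<Rightarrow> bool"
  assumes s: "\<And>v w. E v w \<Longrightarrow> s v \<noteq> s w"
    and vertex: "\<And>v. l v \<le> T"
    and edge: "\<And>v w. E v w \<Longrightarrow> l v + l w \<le> T"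
  shows "\<exists>L. feasible_assignment E l L \<and> (\<Union>v. L v) \<subseteq> {1..T}"
proof -
  define L where "L v = (if s v then {1..l v} else {Suc T - l v..T})" for v
  have "feasible_assignment E l L"
    unfolding feasible_assignment_def
  proof (intro conjI allI impI)
    fix v
    show "finite (L v)" "card (L v) = l v" "0 \<notin> L v"
      using vertex[of v] by (simp_all add: L_def)
  next
    fix v w assume "E v w"
    then show "L v \<inter> L w = {}"
      using s[OF \<open>E v w\<close>] edge[OF \<open>E v w\<close>] by (auto simp: L_def)
  qed
  moreover have "L v \<subseteq> {1..T}" for v
    using vertex[of v] by (auto simp: L_def)
  ultimately show ?thesis by blast
qed

lemma opt_le:
  fixes l :: "'v \<Rightarrow> nat" and s :: "'v \<Rightarrow> bool"
  assumes "\<And>v w. E v w \<Longrightarrow> s v \<noteq> s w"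
    and "\<And>v. l v \<le> T"
    and "\<And>v w. E v w \<Longrightarrow> l v + l w \<le> T"
  shows "opt E l \<le> T"
proof -
  obtain L where L: "feasible_assignment E l L" "(\<Union>v. L v) \<subseteq> {1..T}"
    using feasible_two_colouring[of E s l T, OF assms] by blast
  have fin: "finite (\<Union>v. L v)" using L(2) by (rule finite_subset) simp
  have "opt E l \<le> card (\<Union>v. L v)"
    unfolding opt_def by (rule Least_le) (intro exI[of _ L] conjI L(1) fin refl)
  also have "\<dots> \<le> T" using card_mono[OF _ L(2)] by simp
  finally show ?thesis .
qed

lemma opt_ge:
  assumes "\<exists>L. feasible_assignment E l L \<and> finite (\<Union>v. L v)"
  shows "l v \<le> opt E l" and "E v w \<Longrightarrow> l v + l w \<le> opt E l"
proof -
  from assms have "\<exists>n L. feasible_assignment E l L \<and> finite (\<Union>v. L v) \<and> card (\<Union>v. L v) = n"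
    by blast
  from LeastI_ex[OF this] obtain L where L: "feasible_assignment E l L" "finite (\<Union>v. L v)"
      "card (\<Union>v. L v) = opt E l"
    unfolding opt_def by blast
  have fin: "finite (L u)" "card (L u) = l u" for u
    using L(1) unfolding feasible_assignment_def by auto
  show "l v \<le> opt E l"
    using card_mono[OF L(2), of "L v"] fin L(3) by auto
  assume "E v w"
  then have "L v \<inter> L w = {}" using L(1) unfolding feasible_assignment_def by auto
  then have "card (L v \<union> L w) = l v + l w"
    using card_Un_disjoint[OF fin(1) fin(1)] fin by simp
  moreover have "card (L v \<union> L w) \<le> card (\<Union>v. L v)"
    using L(2) by (intro card_mono) auto
  ultimately show "l v + l w \<le> opt E l" using L(3) by simp
qed

text \<open>For a request sequence on a bipartite graph the hypothesis of opt_ge holds (apply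
  feasible_two_colouring with T = length xs), so its optimum dominates all vertex and
  edge loads.\<close>
lemma opt_load_ge:
  fixes E :: "'v \<Rightarrow> 'v \<Rightarrow> bool"
  assumes "bipartite_graph E"
  shows "load xs v \<le> opt E (load xs)"
    and "E v w \<Longrightarrow> load xs v + load xs w \<le> opt E (load xs)"
proof -
  obtain s :: "'v \<Rightarrow> bool" where s: "\<And>v w. E v w \<Longrightarrow> s v \<noteq> s w"
    using assms unfolding bipartite_graph_def by blast
  have vertex: "load xs u \<le> length xs" for u
    by (simp add: load_def)
  have edge: "load xs u + load xs u' \<le> length xs" if "E u u'" for u u'
    using s[OF that] by (intro load_distinct_sum) auto
  obtain L where "feasible_assignment E (load xs) L" "(\<Union>v. L v) \<subseteq> {1..length xs}"
    using feasible_two_colouring[of E s "load xs" "length xs", OF s vertex edge] by blast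
  then have ex: "\<exists>L. feasible_assignment E (load xs) L \<and> finite (\<Union>v. L v)"
    by (meson finite_atLeastAtMost finite_subset)
  show "load xs v \<le> opt E (load xs)" by (rule opt_ge(1)[OF ex])
  show "E v w \<Longrightarrow> load xs v + load xs w \<le> opt E (load xs)" by (rule opt_ge(2)[OF ex])
qed

lemma alg_freqs_append:
  assumes "v \<notin> set ys"
  shows "alg_freqs alg E (xs @ ys) v = alg_freqs alg E xs v"
proof -
  have "i < length (xs @ ys) \<and> (xs @ ys) ! i = v \<longleftrightarrow> i < length xs \<and> xs ! i = v" for i
    using assms by (auto simp: nth_append)
  moreover have "i < length xs \<Longrightarrow> take (Suc i) (xs @ ys) = take (Suc i) xs" for i
    by simp
  ultimately show ?thesis
    unfolding alg_freqs_def by metis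
qed

lemma Union_alg_freqs:
  "(\<Union>v. alg_freqs alg E xs v) = (\<lambda>i. alg E (take (Suc i) xs)) ` {..<length xs}"
  unfolding alg_freqs_def by auto

lemma finite_Union_alg_freqs: "finite (\<Union>v. alg_freqs alg E xs v)"
  unfolding Union_alg_freqs by simp

section \<open>From competitive algorithms to competitive F-systems\<close>

text \<open>Vertex V c \<tau> k stands for the triple
  (c, \<tau>, k); phase V \<tau> m puts k requests on
  V A \<tau> k and on V B \<tau> k for k = 1..m, and
  phases V t runs the phases \<tau> = 1..t, phase \<tau> being complete.\<close>
fun phase :: "(bool \<Rightarrow> nat \<Rightarrow> nat \<Rightarrow> 'v) \<Rightarrow> nat \<Rightarrow> nat \<Rightarrow> 'v list" where
  "phase V \<tau> 0 = []"
| "phase V \<tau> (Suc k) =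
     phase V \<tau> k @ replicate (Suc k) (V True \<tau> (Suc k)) @ replicate (Suc k) (V False \<tau> (Suc k))"

fun phases :: "(bool \<Rightarrow> nat \<Rightarrow> nat \<Rightarrow> 'v) \<Rightarrow> nat \<Rightarrow> 'v list" where
  "phases V 0 = []"
| "phases V (Suc t) = phases V t @ phase V (Suc t) (Suc t)"

declare phase.simps [simp del]

text \<open>The graph of the universal instance mirrors condition (F2).\<close>
definition universal_graph :: "(bool \<Rightarrow> nat \<Rightarrow> nat \<Rightarrow> 'v) \<Rightarrow> 'v \<Rightarrow> 'v \<Rightarrow> bool" where
  "universal_graph V u w \<longleftrightarrow> (\<exists>t k t' k'. 0 < k \<and> k \<le> t \<and> 0 < k' \<and> k' \<le> t' \<and> k + k' \<le> max t t' \<and>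
      ((u = V True t k \<and> w = V False t' k') \<or> (u = V False t' k' \<and> w = V True t k)))"

definition alg_F_system :: "'v algorithm \<Rightarrow> (bool \<Rightarrow> nat \<Rightarrow> nat \<Rightarrow> 'v) \<Rightarrow> fsys" where
  "alg_F_system alg V c t k = alg_freqs alg (universal_graph V) (phases V t) (V c t k)"

locale vertex_indexing =
  fixes V :: "bool \<Rightarrow> nat \<Rightarrow> nat \<Rightarrow> 'v"
  assumes V_eq_iff: "V c t k = V c' t' k' \<longleftrightarrow> c = c' \<and> t = t' \<and> k = k'"
begin

lemma load_phase:
  "load (phase V \<tau> m) (V c \<tau>' k) = (if \<tau>' = \<tau> \<and> 0 < k \<and> k \<le> m then k else 0)"
  by (induction m) (auto simp: phase.simps V_eq_iff)

lemma load_phase_outside: "(\<forall>c t k. u \<noteq> V c t k) \<Longrightarrow> load (phase V \<tau> m) u = 0"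
  by (induction m) (auto simp: phase.simps)

lemma load_phases:
  "load (phases V t) (V c \<tau> k) = (if 0 < k \<and> k \<le> \<tau> \<and> \<tau> \<le> t then k else 0)"
  by (induction t) (auto simp: load_phase V_eq_iff)

lemma load_phases_le: "load (phases V t) u \<le> t"
proof (cases "\<exists>c \<tau> k. u = V c \<tau> k")
  case True
  then show ?thesis by (auto simp: load_phases)
next
  case False
  have "load (phases V t) u = 0"
    using False by (induction t) (auto simp: load_phase_outside)
  then show ?thesis by simp
qed

lemma universal_graph_colouring:
  "universal_graph V u w \<Longrightarrow> (\<exists>t k. u = V True t k) \<noteq> (\<exists>t k. w = V True t k)"
  unfolding universal_graph_def by (auto simp: V_eq_iff)

lemma bipartite_universal_graph: "bipartite_graph (universal_graph V)"
  unfolding bipartite_graph_def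
proof (intro conjI exI[of _ "\<lambda>u. \<exists>t k. u = V True t k"])
  show "\<forall>v w. universal_graph V v w \<longrightarrow> universal_graph V w v"
    unfolding universal_graph_def by blast
  show "\<forall>v w. universal_graph V v w \<longrightarrow> (\<exists>t k. v = V True t k) \<noteq> (\<exists>t k. w = V True t k)"
    using universal_graph_colouring by blast
qed

text \<open>After t phases every vertex and every edge carries load at most t,
  so the optimum is at most t.\<close>
lemma opt_phases: "opt (universal_graph V) (load (phases V t)) \<le> t"
proof (rule opt_le[where s = "\<lambda>u. \<exists>t k. u = V True t k"])
  show "universal_graph V u w \<Longrightarrow> load (phases V t) u + load (phases V t) w \<le> t" for u w
    unfolding universal_graph_def by (auto simp: load_phases)
qed (fact universal_graph_colouring load_phases_le)+

text \<open>Vertex V c t k receives no requests after phase t, so the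
  frequencies used there are fixed from then on.\<close>
lemma alg_freqs_phases_stable:
  assumes "t \<le> m"
  shows "alg_freqs alg E (phases V m) (V c t k) = alg_freqs alg E (phases V t) (V c t k)"
  using assms
proof (induction m rule: dec_induct)
  case (step n)
  have "V c t k \<notin> set (phase V (Suc n) (Suc n))"
    using step(1) by (simp add: load_eq_0_iff[symmetric] load_phase)
  then show ?case using step(3) by (simp add: alg_freqs_append)
qed simp

lemma alg_F_system_phases:
  "\<tau> \<le> t \<Longrightarrow> alg_F_system alg V c \<tau> k = alg_freqs alg (universal_graph V) (phases V t) (V c \<tau> k)"
  unfolding alg_F_system_def by (rule alg_freqs_phases_stable[symmetric])

text \<open>An algorithm that is valid on the universal instance yields an F-system: (F1)
  because V c t k carries k requests, (F2) because the two vertices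
  are adjacent and are both finished after phase max t t'.\<close>
lemma alg_F_system_is_F_system:
  assumes valid: "\<And>t. alg_valid alg (universal_graph V) (phases V t)"
  shows "F_system (alg_F_system alg V)"
  unfolding F_system_def
proof (intro conjI allI impI)
  fix c :: bool and t k :: nat assume "0 < k \<and> k \<le> t"
  then show "0 \<notin> alg_F_system alg V c t k"
    and "infinite (alg_F_system alg V c t k) \<or> k \<le> card (alg_F_system alg V c t k)"
    using valid[of t] by (auto simp: alg_valid_def alg_F_system_def load_phases)
next
  fix t k t' k' :: nat assume h: "0 < k \<and> k \<le> t \<and> 0 < k' \<and> k' \<le> t' \<and> k + k' \<le> max t t'"
  then have "universal_graph V (V True t k) (V False t' k')"
    unfolding universal_graph_def by blast
  then show "alg_F_system alg V True t k \<inter> alg_F_system alg V False t' k' = {}"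
    using valid[of "max t t'"] alg_F_system_phases[of t "max t t'"] alg_F_system_phases[of t' "max t t'"]
    unfolding alg_valid_def by simp
qed

lemma F_union_alg_F_system:
  "F_union (alg_F_system alg V) t \<subseteq> (\<Union>v. alg_freqs alg (universal_graph V) (phases V t) v)"
  unfolding F_union_def by (auto simp: alg_F_system_phases)

end

lemma vertex_indexing_exists:
  assumes "infinite (UNIV :: 'v set)"
  shows "\<exists>V :: bool \<Rightarrow> nat \<Rightarrow> nat \<Rightarrow> 'v. vertex_indexing V"
proof -
  obtain f :: "nat \<Rightarrow> 'v" where f: "inj f"
    using infinite_countable_subset[OF assms] by blast
  have "vertex_indexing (\<lambda>c t k. f (to_nat (c, t, k)))"
    by unfold_locales (auto simp: inj_eq[OF f] inj_eq[OF inj_to_nat])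
  then show ?thesis by blast
qed

text \<open>The frequencies of F up to level t are among those the algorithm uses on the
  first t phases, whose optimum is at most t; so F inherits the competitive ratio.\<close>
theorem competitive_alg_imp_F_system:
  fixes alg :: "'v algorithm"
  assumes R: "0 \<le> R" and V: "vertex_indexing V" and alg: "competitive_alg R alg"
  shows "competitive_F_system R (alg_F_system alg V)"
proof -
  interpret vertex_indexing V by (fact V)
  obtain lam where lam: "\<And>E xs. bipartite_graph E \<Longrightarrow>
        alg_valid alg E xs \<and> real (alg_cost alg E xs) \<le> R * real (opt E (load xs)) + lam"
    using alg unfolding competitive_alg_def by blast
  have cost: "real (card (F_union (alg_F_system alg V) t)) \<le> R * real t + lam" for t
  proof -
    have "card (F_union (alg_F_system alg V) t) \<le> alg_cost alg (universal_graph V) (phases V t)"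
      unfolding alg_cost_def by (rule card_mono[OF finite_Union_alg_freqs F_union_alg_F_system])
    also have "real \<dots> \<le> R * real (opt (universal_graph V) (load (phases V t))) + lam"
      using lam[OF bipartite_universal_graph] by blast
    also have "\<dots> \<le> R * real t + lam"
      using opt_phases[of t] R by (simp add: mult_left_mono)
    finally show ?thesis by simp
  qed
  have "finite (F_union (alg_F_system alg V) t)" for t
    by (rule finite_subset[OF F_union_alg_F_system finite_Union_alg_freqs])
  then show ?thesis
    unfolding competitive_F_system_def
    using alg_F_system_is_F_system lam[OF bipartite_universal_graph] cost by blast
qed

section \<open>From competitive F-systems to competitive algorithms\<close>

lemma F_system_disjoint:
  assumes "F_system F" "c \<noteq> c'" "0 < k" "k \<le> t" "0 < k'" "k' \<le> t'" "k + k' \<le> max t t'"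
  shows "F c t k \<inter> F c' t' k' = {}"
proof (cases c)
  case True
  then show ?thesis using assms unfolding F_system_def by simp
next
  case False
  then have "F True t' k' \<inter> F False t k = {}"
    using assms unfolding F_system_def by (simp add: max.commute add.commute)
  then show ?thesis using False assms(2) by auto
qed

lemma F_system_nonzero: "F_system F \<Longrightarrow> 0 < k \<Longrightarrow> k \<le> t \<Longrightarrow> 0 \<notin> F c t k"
  unfolding F_system_def by blast

lemma F_system_fresh:
  assumes F: "F_system F" and k: "0 < k" "k \<le> t" and U: "finite U" "card U < k"
  shows "\<exists>f. f \<in> F c t k \<and> f \<notin> U"
proof (rule ccontr)
  assume "\<not> ?thesis"
  then have sub: "F c t k \<subseteq> U" by blast
  then have "finite (F c t k)" using U(1) by (rule finite_subset)
  then have "k \<le> card (F c t k)" using F k unfolding F_system_def by blast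
  also have "\<dots> \<le> card U" using card_mono[OF U(1) sub] .
  finally show False using U(2) by simp
qed

definition colour :: "('v \<Rightarrow> 'v \<Rightarrow> bool) \<Rightarrow> 'v \<Rightarrow> bool" where
  "colour E = (SOME s. \<forall>v w. E v w \<longrightarrow> s v \<noteq> s w)"

lemma colour_edge:
  assumes "bipartite_graph E" and "E v w"
  shows "colour E v \<noteq> colour E w"
proof -
  have "\<exists>s :: _ \<Rightarrow> bool. \<forall>v w. E v w \<longrightarrow> s v \<noteq> s w"
    using assms(1) unfolding bipartite_graph_def by (rule conjunct2)
  then have "\<forall>v w. E v w \<longrightarrow> colour E v \<noteq> colour E w"
    unfolding colour_def by (rule someI_ex[of "\<lambda>s. \<forall>v w. E v w \<longrightarrow> s v \<noteq> s w"])
  then show ?thesis using assms(2) by blast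
qed

definition level :: "('v \<Rightarrow> 'v \<Rightarrow> bool) \<Rightarrow> 'v list \<Rightarrow> 'v \<Rightarrow> nat" where
  "level E ys v = Max (insert (load ys v) ((\<lambda>w. load ys v + load ys w) ` {w. w \<in> set ys \<and> E v w}))"

lemma load_le_level: "load ys v \<le> level E ys v"
  unfolding level_def by (rule Max_ge) auto

lemma edge_load_le_level: "w \<in> set ys \<Longrightarrow> E v w \<Longrightarrow> load ys v + load ys w \<le> level E ys v"
  unfolding level_def by (rule Max_ge) auto

lemma level_le:
  "load ys v \<le> B \<Longrightarrow> (\<And>w. w \<in> set ys \<Longrightarrow> E v w \<Longrightarrow> load ys v + load ys w \<le> B) \<Longrightarrow> level E ys v \<le> B"
  unfolding level_def by (subst Max_le_iff) auto

text \<open>The algorithm induced by an F-system: the newly arrived request at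
  v = last ys, the k-th at v, gets some frequency of
  F (colour E v) (level E ys v) k not yet used at v.\<close>
function F_alg :: "fsys \<Rightarrow> ('v \<Rightarrow> 'v \<Rightarrow> bool) \<Rightarrow> 'v list \<Rightarrow> nat" where
  "F_alg F E ys = (if ys = [] then 0 else
     (SOME f. f \<in> F (colour E (last ys)) (level E ys (last ys)) (load ys (last ys)) \<and>
        f \<notin> set (map (\<lambda>i. F_alg F E (take (Suc i) (butlast ys)))
                   (filter (\<lambda>i. butlast ys ! i = last ys) [0..<length (butlast ys)]))))"
  by pat_completeness auto
termination by (relation "measure (\<lambda>(F, E, ys). length ys)") auto

declare F_alg.simps [simp del]

abbreviation rank :: "'v list \<Rightarrow> nat \<Rightarrow> nat" where
  "rank xs i \<equiv> load (take (Suc i) xs) (xs ! i)"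

abbreviation req_level :: "('v \<Rightarrow> 'v \<Rightarrow> bool) \<Rightarrow> 'v list \<Rightarrow> nat \<Rightarrow> nat" where
  "req_level E xs i \<equiv> level E (take (Suc i) xs) (xs ! i)"

lemma rank_bounds:
  assumes "i < length xs"
  shows "0 < rank xs i" and "rank xs i \<le> req_level E xs i"
  using assms by (simp add: load_take_Suc_nth) (rule load_le_level)

lemma F_alg_nth:
  assumes i: "i < length xs"
  shows "F_alg F E (take (Suc i) xs) = (SOME f. f \<in> F (colour E (xs ! i)) (req_level E xs i) (rank xs i)
      \<and> f \<notin> (\<lambda>j. F_alg F E (take (Suc j) xs)) ` {j. j < i \<and> xs ! j = xs ! i})"
proof -
  have "take (Suc i) xs = take i xs @ [xs ! i]" using i by (rule take_Suc_conv_app_nth)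
  then have ne: "take (Suc i) xs \<noteq> []" and last: "last (take (Suc i) xs) = xs ! i"
    and butlast: "butlast (take (Suc i) xs) = take i xs" by simp_all
  have length: "length (take i xs) = i" using i by simp
  have earlier: "set (map (\<lambda>j. F_alg F E (take (Suc j) (take i xs)))
        (filter (\<lambda>j. take i xs ! j = xs ! i) [0..<i]))
      = (\<lambda>j. F_alg F E (take (Suc j) xs)) ` {j. j < i \<and> xs ! j = xs ! i}"
    by (auto simp: min_def)
  show ?thesis
    using F_alg.simps[of F E "take (Suc i) xs"]
    by (simp only: ne last butlast length earlier if_False)
qed

text \<open>The frequency of the i-th request lies in the prescribed set and differs
  from all earlier frequencies at the same vertex; the choice is possible by
  F_system_fresh since there are only rank xs i - 1 of those.\<close>
lemma F_alg_choice:
  assumes F: "F_system F" and i: "i < length xs"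
  shows "F_alg F E (take (Suc i) xs) \<in> F (colour E (xs ! i)) (req_level E xs i) (rank xs i)"
    and "\<And>j. j < i \<Longrightarrow> xs ! j = xs ! i \<Longrightarrow> F_alg F E (take (Suc j) xs) \<noteq> F_alg F E (take (Suc i) xs)"
proof -
  define U where "U = (\<lambda>j. F_alg F E (take (Suc j) xs)) ` {j. j < i \<and> xs ! j = xs ! i}"
  have "card U \<le> card {j. j < i \<and> xs ! j = xs ! i}"
    unfolding U_def by (rule card_image_le) simp
  also have "{j. j < i \<and> xs ! j = xs ! i} = {j. j < length (take i xs) \<and> take i xs ! j = xs ! i}"
    using i by auto
  also have "card \<dots> = load (take i xs) (xs ! i)"
    by (rule load_card[symmetric])
  also have "\<dots> < rank xs i"
    using load_take_Suc_nth[OF i] by simp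
  finally have "\<exists>f. f \<in> F (colour E (xs ! i)) (req_level E xs i) (rank xs i) \<and> f \<notin> U"
    using F_system_fresh[OF F rank_bounds[OF i]] unfolding U_def by simp
  then have P: "F_alg F E (take (Suc i) xs) \<in> F (colour E (xs ! i)) (req_level E xs i) (rank xs i)
      \<and> F_alg F E (take (Suc i) xs) \<notin> U"
    unfolding F_alg_nth[OF i] U_def by (rule someI_ex)
  then show "F_alg F E (take (Suc i) xs) \<in> F (colour E (xs ! i)) (req_level E xs i) (rank xs i)"
    by blast
  show "F_alg F E (take (Suc j) xs) \<noteq> F_alg F E (take (Suc i) xs)" if "j < i" "xs ! j = xs ! i" for j
  proof -
    have "F_alg F E (take (Suc j) xs) \<in> U" unfolding U_def using that by blast
    then show ?thesis using P by auto
  qed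
qed

text \<open>An earlier request at a neighbour gets a different frequency: the two ranks sum
  to at most the level of the later request, so (F2) separates the two sets.\<close>
lemma F_alg_edge:
  assumes E: "bipartite_graph E" and F: "F_system F" and ji: "j < i" and i: "i < length xs"
    and e: "E (xs ! i) (xs ! j)"
  shows "F_alg F E (take (Suc j) xs) \<noteq> F_alg F E (take (Suc i) xs)"
proof -
  have j: "j < length xs" using ji i by simp
  have "rank xs j \<le> load (take (Suc i) xs) (xs ! j)"
    using ji by (intro load_take_mono) simp
  moreover have "xs ! j \<in> set (take (Suc i) xs)"
    using nth_mem[of j "take (Suc i) xs"] ji i by simp
  then have "rank xs i + load (take (Suc i) xs) (xs ! j) \<le> req_level E xs i"
    using e by (rule edge_load_le_level)
  ultimately have "rank xs i + rank xs j \<le> max (req_level E xs i) (req_level E xs j)"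
    by linarith
  then have "F (colour E (xs ! i)) (req_level E xs i) (rank xs i)
      \<inter> F (colour E (xs ! j)) (req_level E xs j) (rank xs j) = {}"
    by (rule F_system_disjoint[OF F colour_edge[OF E e] rank_bounds[OF i] rank_bounds[OF j]])
  then show ?thesis
    using F_alg_choice(1)[OF F i, where E = E] F_alg_choice(1)[OF F j, where E = E] by auto
qed

lemma F_alg_conflict:
  assumes E: "bipartite_graph E" and F: "F_system F"
    and ij: "i \<noteq> j" "i < length xs" "j < length xs"
    and conflict: "xs ! i = xs ! j \<or> E (xs ! i) (xs ! j)"
  shows "F_alg F E (take (Suc i) xs) \<noteq> F_alg F E (take (Suc j) xs)"
proof -
  have sym: "E (xs ! j) (xs ! i)" if "E (xs ! i) (xs ! j)"
    using E that unfolding bipartite_graph_def by blast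
  show ?thesis
  proof (cases "j < i")
    case True
    then show ?thesis
      using conflict F_alg_choice(2)[OF F ij(2) True, where E = E] F_alg_edge[OF E F True ij(2)] by metis
  next
    case False
    then have "i < j" using ij(1) by simp
    then show ?thesis
      using conflict sym F_alg_choice(2)[OF F ij(3), where E = E] F_alg_edge[OF E F _ ij(3)] by metis
  qed
qed

theorem F_alg_valid:
  assumes E: "bipartite_graph E" and F: "F_system F"
  shows "alg_valid (F_alg F) E xs"
proof -
  define fr where "fr i = F_alg F E (take (Suc i) xs)" for i
  have freqs: "alg_freqs (F_alg F) E xs v = fr ` {i. i < length xs \<and> xs ! i = v}" for v
    unfolding alg_freqs_def fr_def by auto
  have inj: "inj_on fr {i. i < length xs \<and> xs ! i = v}" for v
  proof (rule inj_onI, rule ccontr)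
    fix i j assume "i \<in> {i. i < length xs \<and> xs ! i = v}" "j \<in> {i. i < length xs \<and> xs ! i = v}"
      and "fr i = fr j" "i \<noteq> j"
    then show False using F_alg_conflict[OF E F, of i j xs] by (auto simp: fr_def)
  qed
  have nonzero: "fr i \<noteq> 0" if i: "i < length xs" for i
  proof
    assume "fr i = 0"
    then have "0 \<in> F (colour E (xs ! i)) (req_level E xs i) (rank xs i)"
      using F_alg_choice(1)[OF F i, where E = E] unfolding fr_def by simp
    then show False
      using F_system_nonzero[OF F rank_bounds(1)[OF i] rank_bounds(2)[OF i, where E = E]] by contradiction
  qed
  show ?thesis
    unfolding alg_valid_def freqs
  proof (intro conjI allI impI)
    fix v
    show "card (fr ` {i. i < length xs \<and> xs ! i = v}) = load xs v"
      by (simp add: card_image[OF inj] load_card)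
    show "0 \<notin> fr ` {i. i < length xs \<and> xs ! i = v}"
      using nonzero by (simp add: image_iff)
  next
    fix v w assume vw: "E v w"
    show "fr ` {i. i < length xs \<and> xs ! i = v} \<inter> fr ` {i. i < length xs \<and> xs ! i = w} = {}"
    proof (rule ccontr)
      assume "fr ` {i. i < length xs \<and> xs ! i = v} \<inter> fr ` {i. i < length xs \<and> xs ! i = w} \<noteq> {}"
      then obtain i j where "i < length xs" "xs ! i = v" "j < length xs" "xs ! j = w" "fr i = fr j"
        by blast
      moreover have "v \<noteq> w" using colour_edge[OF E vw] by auto
      ultimately show False using F_alg_conflict[OF E F, of i j xs] vw unfolding fr_def by auto
    qed
  qed
qed

text \<open>Every level is at most the optimum of the whole instance, since levels are loads
  of vertices and edges.\<close>
lemma req_level_le_opt: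
  assumes E: "bipartite_graph E" and i: "i < length xs"
  shows "req_level E xs i \<le> opt E (load xs)"
proof (rule level_le)
  show "rank xs i \<le> opt E (load xs)"
    using load_take_le[of "Suc i" xs "xs ! i"] opt_load_ge(1)[OF E, of xs "xs ! i"] by linarith
  fix w assume "E (xs ! i) w"
  then have "load xs (xs ! i) + load xs w \<le> opt E (load xs)"
    by (rule opt_load_ge(2)[OF E])
  then show "rank xs i + load (take (Suc i) xs) w \<le> opt E (load xs)"
    using load_take_le[of "Suc i" xs] by (meson add_le_mono le_trans)
qed

lemma F_alg_freqs_subset:
  assumes E: "bipartite_graph E" and F: "F_system F"
  shows "(\<Union>v. alg_freqs (F_alg F) E xs v) \<subseteq> F_union F (opt E (load xs))"
proof
  fix f assume "f \<in> (\<Union>v. alg_freqs (F_alg F) E xs v)"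
  then obtain i where i: "i < length xs" and f: "f = F_alg F E (take (Suc i) xs)"
    unfolding Union_alg_freqs by auto
  have "rank xs i \<le> req_level E xs i \<and> req_level E xs i \<le> opt E (load xs)"
    using rank_bounds[OF i] req_level_le_opt[OF E i] by blast
  then show "f \<in> F_union F (opt E (load xs))"
    unfolding F_union_def f using F_alg_choice(1)[OF F i, where E = E] rank_bounds(1)[OF i] by blast
qed

text \<open>The additive constant is enlarged to its absolute value to cover the empty
  request sequence, for which the F-system bound says nothing.\<close>
theorem competitive_F_system_imp_alg:
  assumes R: "0 \<le> R" and F: "competitive_F_system R F"
  shows "competitive_alg R (F_alg F :: 'v algorithm)"
proof -
  have FS: "F_system F" using F unfolding competitive_F_system_def by blast
  obtain lam where lam: "\<And>t. 0 < t \<Longrightarrow> finite (F_union F t) \<and> real (card (F_union F t)) \<le> R * real t + lam"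
    using F unfolding competitive_F_system_def by blast
  have cost: "real (alg_cost (F_alg F) E xs) \<le> R * real (opt E (load xs)) + \<bar>lam\<bar>"
    if E: "bipartite_graph E" for E :: "'v \<Rightarrow> 'v \<Rightarrow> bool" and xs
  proof (cases "xs = []")
    case True
    then show ?thesis using R by (simp add: alg_cost_def Union_alg_freqs)
  next
    case False
    then have first: "0 < length xs" by simp
    have "0 < opt E (load xs)"
      using rank_bounds(1)[OF first] rank_bounds(2)[OF first, where E = E] req_level_le_opt[OF E first]
      by linarith
    then have "alg_cost (F_alg F) E xs \<le> card (F_union F (opt E (load xs)))"
      "real (card (F_union F (opt E (load xs)))) \<le> R * real (opt E (load xs)) + lam"
      unfolding alg_cost_def using card_mono[OF _ F_alg_freqs_subset[OF E FS]] lam by blast+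
    then show ?thesis by linarith
  qed
  show ?thesis
    unfolding competitive_alg_def using F_alg_valid[OF _ FS] cost by blast
qed

theorem lemma1:
  fixes R :: real
  assumes "R \<ge> 1"
    and "infinite (UNIV :: 'v set)"
  shows "(\<exists>alg :: 'v algorithm. competitive_alg R alg) \<longleftrightarrow> (\<exists>F. competitive_F_system R F)"
proof -
  have R: "0 \<le> R" using assms(1) by simp
  obtain V :: "bool \<Rightarrow> nat \<Rightarrow> nat \<Rightarrow> 'v" where V: "vertex_indexing V"
    using vertex_indexing_exists[OF assms(2)] by blast
  show ?thesis
  proof
    assume "\<exists>alg :: 'v algorithm. competitive_alg R alg"
    then obtain alg :: "'v algorithm" where "competitive_alg R alg" by blast
    then have "competitive_F_system R (alg_F_system alg V)"
      by (rule competitive_alg_imp_F_system[OF R V])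
    then show "\<exists>F. competitive_F_system R F" by blast
  next
    assume "\<exists>F. competitive_F_system R F"
    then obtain F where "competitive_F_system R F" by blast
    then have "competitive_alg R (F_alg F :: 'v algorithm)"
      by (rule competitive_F_system_imp_alg[OF R])
    then show "\<exists>alg :: 'v algorithm. competitive_alg R alg" by blast
  qed
qed

end
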